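(* Let $R>0$, $h>0$, $g_1>0$ be reals and $\lambda_2>0$, and let $G$ be an exponential random variable with rate $\lambda_2$ (representing $g_2^2$). For $\Delta>0$ define (logarithms base $2$, $[x]^+=\max\{x,0\}$) $$R_{\mathrm{QMF}}(\Delta)=\Big[\min\Big\{\log\Big(1+\frac{h^2}{1+\Delta}+G\Big),\ \log(1+g_1^2+G)-\log\frac{1+\Delta}{\Delta}\Big\}\Big]^+,$$ and the conditional outage probability $P(\Delta)=\Pr\{R>R_{\mathrm{QMF}}(\Delta)\}$. Then $P(\Delta)$ is minimized over $\Delta>0$ at $$\Delta^*=\frac{\sqrt{(g_1^2-h^2-2^R)^2+4g_1^22^R}-(g_1^2-h^2-2^R)}{2g_1^2},$$ the positive root of $g_1^2\Delta^2+(g_1^2-h^2-2^R)\Delta-2^R=0$.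
   Context: This is the full-duplex Gaussian single-relay channel ($Y_r=\mathsf hX+Z_r$, $Y=\mathsf g_1X_r+\mathsf g_2X+Z$, unit powers and noise) under Rayleigh fading, where the relay knows the realizations of its incoming and outgoing magnitudes $h=|\mathsf h|$, $g_1=|\mathsf g_1|$ but not $g_2=|\mathsf g_2|$, for which $g_2^2$ is exponential with rate $\lambda_2$. The relay quantizes with a Gaussian vector quantizer of distortion $\Delta$, and $R_{\mathrm{QMF}}(\Delta)$ is the resulting quantize-map-and-forward rate; $P(\Delta)$ is the outage probability at rate $R$ conditioned on $h,g_1$. *)

theory Defs
  imports "HOL-Probability.Probability"
begin

definition pos_part :: "real \<Rightarrow> real" where
  "pos_part x = max x 0"

definition R_QMF :: "real \<Rightarrow> real \<Rightarrow> real \<Rightarrow> real \<Rightarrow> real" where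
  "R_QMF h g1 D Gv = pos_part (min (log 2 (1 + h\<^sup>2 / (1 + D) + Gv))
                                 (log 2 (1 + g1\<^sup>2 + Gv) - log 2 ((1 + D) / D)))"

definition outage :: "'a measure \<Rightarrow> ('a \<Rightarrow> real) \<Rightarrow> real \<Rightarrow> real \<Rightarrow> real \<Rightarrow> real \<Rightarrow> real" where
  "outage M G R h g1 D = measure M {\<omega> \<in> space M. R > R_QMF h g1 D (G \<omega>)}"

definition Delta_star :: "real \<Rightarrow> real \<Rightarrow> real \<Rightarrow> real" where
  "Delta_star R h g1 =
     (sqrt ((g1\<^sup>2 - h\<^sup>2 - 2 powr R)\<^sup>2 + 4 * g1\<^sup>2 * 2 powr R) - (g1\<^sup>2 - h\<^sup>2 - 2 powr R)) / (2 * g1\<^sup>2)"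

end

theory Submission
  imports Defs
begin

text \<open>For a nonnegative realisation of G, outage at distortion D happens exactly when G lies
  below the larger of two thresholds: the one of the direct-plus-relay cut, which increases
  with D, and the one of the quantisation cut, which decreases with D. Hence the outage
  probability is a monotone function of that larger threshold, and the threshold is smallest
  where the two branches cross. Clearing denominators, the crossing point is the positive
  root of the quadratic defining \<Delta>*.\<close>

definition outage_threshold :: "real \<Rightarrow> real \<Rightarrow> real \<Rightarrow> real \<Rightarrow> real" where
  "outage_threshold R h g1 D =
     max (2 powr R - 1 - h\<^sup>2 / (1 + D)) (2 powr R * ((1 + D) / D) - 1 - g1\<^sup>2)"

lemma R_QMF_less_iff_below_threshold:
  fixes R h g1 D x :: real
  assumes "R > 0" "D > 0" "x \<ge> 0"
  shows "R > R_QMF h g1 D x \<longleftrightarrow> x < outage_threshold R h g1 D"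
proof -
  have direct_pos: "1 + h\<^sup>2 / (1 + D) + x > 0" using assms by (simp add: add_pos_nonneg)
  have relay_pos: "1 + g1\<^sup>2 + x > 0" using assms by (simp add: add_pos_nonneg)
  have ratio_pos: "(1 + D) / D > 0" using assms by simp
  have "log 2 (1 + g1\<^sup>2 + x) - log 2 ((1 + D) / D) = log 2 ((1 + g1\<^sup>2 + x) / ((1 + D) / D))"
    using relay_pos ratio_pos by (rule log_divide_pos[symmetric])
  then have "R > R_QMF h g1 D x \<longleftrightarrow>
        R > log 2 (1 + h\<^sup>2 / (1 + D) + x) \<or> R > log 2 ((1 + g1\<^sup>2 + x) / ((1 + D) / D))"
    using assms by (simp add: R_QMF_def pos_part_def min_less_iff_disj)
  also have "\<dots> \<longleftrightarrow> 1 + h\<^sup>2 / (1 + D) + x < 2 powr R \<or> 1 + g1\<^sup>2 + x < 2 powr R * ((1 + D) / D)"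
    using direct_pos divide_pos_pos[OF relay_pos ratio_pos] pos_divide_less_eq[OF ratio_pos]
    by (simp add: log_less_iff)
  also have "\<dots> \<longleftrightarrow> x < outage_threshold R h g1 D"
    unfolding outage_threshold_def by (simp add: less_max_iff_disj) linarith
  finally show ?thesis .
qed

lemma outage_eq_measure_below_threshold:
  fixes M :: "'a measure" and G :: "'a \<Rightarrow> real"
  assumes "prob_space M" "G \<in> borel_measurable M" "AE \<omega> in M. G \<omega> \<ge> 0"
    and "R > 0" "D > 0"
  shows "outage M G R h g1 D = measure M {\<omega> \<in> space M. G \<omega> < outage_threshold R h g1 D}"
proof -
  interpret prob_space M by fact
  note [measurable] = \<open>G \<in> borel_measurable M\<close>
  show ?thesis
    unfolding outage_def
  proof (rule finite_measure_eq_AE)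
    show "AE \<omega> in M. \<omega> \<in> {\<omega> \<in> space M. R > R_QMF h g1 D (G \<omega>)} \<longleftrightarrow>
                      \<omega> \<in> {\<omega> \<in> space M. G \<omega> < outage_threshold R h g1 D}"
      using assms(3) by eventually_elim (use R_QMF_less_iff_below_threshold assms(4,5) in auto)
    show "{\<omega> \<in> space M. R > R_QMF h g1 D (G \<omega>)} \<in> sets M"
      unfolding R_QMF_def pos_part_def by measurable
  qed measurable
qed

lemma max_minimal_at_crossing:
  fixes f g :: "'a::linorder \<Rightarrow> 'b::linorder"
  assumes "mono_on S f" "antimono_on S g" "f x\<^sub>0 = g x\<^sub>0" "x\<^sub>0 \<in> S" "x \<in> S"
  shows "max (f x\<^sub>0) (g x\<^sub>0) \<le> max (f x) (g x)"
proof (cases "x\<^sub>0 \<le> x")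
  case True
  then have "f x\<^sub>0 \<le> f x" using mono_onD[OF assms(1,4,5)] by blast
  then show ?thesis using assms(3) by (simp add: le_max_iff_disj)
next
  case False
  then have "g x\<^sub>0 \<le> g x" using monotone_onD[OF assms(2,5,4)] by simp
  then show ?thesis using assms(3) by (simp add: le_max_iff_disj)
qed

lemma quadratic_positive_root:
  fixes a b c :: real
  assumes "a > 0" "c > 0"
  defines "x \<equiv> (sqrt (b\<^sup>2 + 4 * a * c) - b) / (2 * a)"
  shows "x > 0" "a * x\<^sup>2 + b * x - c = 0"
proof -
  define q where "q = sqrt (b\<^sup>2 + 4 * a * c)"
  have q_sq: "q\<^sup>2 = b\<^sup>2 + 4 * a * c"
    unfolding q_def using assms by (simp add: add_nonneg_nonneg)
  have "sqrt (b\<^sup>2) < q" unfolding q_def using assms by (intro real_sqrt_less_mono) simp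
  then have "q > b" by simp
  then show "x > 0" unfolding x_def q_def[symmetric] using assms by simp
  have scaled: "2 * a * x = q - b" unfolding x_def q_def using assms by simp
  have "4 * a * (a * x\<^sup>2 + b * x) = (2 * a * x)\<^sup>2 + 2 * b * (2 * a * x)"
    by (simp add: algebra_simps power2_eq_square)
  also have "\<dots> = q\<^sup>2 - b\<^sup>2" unfolding scaled by (simp add: algebra_simps power2_eq_square)
  finally have "4 * a * (a * x\<^sup>2 + b * x) = q\<^sup>2 - b\<^sup>2" .
  then show "a * x\<^sup>2 + b * x - c = 0" using q_sq assms by simp
qed

lemma threshold_branches_cross_iff:
  fixes s h g1 D :: real
  assumes "D > 0"
  shows "s - 1 - h\<^sup>2 / (1 + D) = s * ((1 + D) / D) - 1 - g1\<^sup>2 \<longleftrightarrow>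
         g1\<^sup>2 * D\<^sup>2 + (g1\<^sup>2 - h\<^sup>2 - s) * D - s = 0"
  using assms by (simp add: field_simps power2_eq_square)

lemma outage_threshold_minimal_at_crossing:
  fixes R h g1 D\<^sub>0 D :: real
  assumes "D\<^sub>0 > 0" "D > 0" "g1\<^sup>2 * D\<^sub>0\<^sup>2 + (g1\<^sup>2 - h\<^sup>2 - 2 powr R) * D\<^sub>0 - 2 powr R = 0"
  shows "outage_threshold R h g1 D\<^sub>0 \<le> outage_threshold R h g1 D"
  unfolding outage_threshold_def
proof (rule max_minimal_at_crossing[where S = "{0<..}"])
  show "mono_on {0<..} (\<lambda>D. 2 powr R - 1 - h\<^sup>2 / (1 + D))"
    by (intro monotone_onI) (simp add: frac_le)
  show "antimono_on {0<..} (\<lambda>D. 2 powr R * ((1 + D) / D) - 1 - g1\<^sup>2)"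
    by (intro monotone_onI) (simp add: field_simps)
qed (use assms threshold_branches_cross_iff in auto)

theorem mainTheorem9:
  fixes M :: "'a measure" and G :: "'a \<Rightarrow> real" and R h g1 lam :: real
  assumes "prob_space M"
    and "distributed M lborel G (exponential_density lam)"
    and "R > 0" and "h > 0" and "g1 > 0" and "lam > 0"
  shows "Delta_star R h g1 > 0
    \<and> g1\<^sup>2 * (Delta_star R h g1)\<^sup>2 + (g1\<^sup>2 - h\<^sup>2 - 2 powr R) * Delta_star R h g1 - 2 powr R = 0
    \<and> (\<forall>D > 0. outage M G R h g1 (Delta_star R h g1) \<le> outage M G R h g1 D)"
proof -
  interpret prob_space M by fact
  let ?D\<^sub>0 = "Delta_star R h g1"
  have root: "?D\<^sub>0 > 0" "g1\<^sup>2 * ?D\<^sub>0\<^sup>2 + (g1\<^sup>2 - h\<^sup>2 - 2 powr R) * ?D\<^sub>0 - 2 powr R = 0"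
    using quadratic_positive_root[of "g1\<^sup>2" "2 powr R" "g1\<^sup>2 - h\<^sup>2 - 2 powr R"] assms(5)
    by (simp_all add: Delta_star_def)
  have G_meas[measurable]: "G \<in> borel_measurable M"
    using distributed_measurable[OF assms(2)] by simp
  have G_nonneg: "AE \<omega> in M. G \<omega> \<ge> 0"
    using distributed_AE2[OF assms(2), of "\<lambda>x. 0 \<le> x"] by (simp add: exponential_density_def)
  have "outage M G R h g1 ?D\<^sub>0 \<le> outage M G R h g1 D" if "D > 0" for D
    using outage_threshold_minimal_at_crossing[OF root(1) that root(2)] root(1) that
    by (auto simp: outage_eq_measure_below_threshold[OF assms(1) G_meas G_nonneg assms(3)]
             intro!: finite_measure_mono)
  with root show ?thesis by blast
qed

end
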